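(* For $n\in\mathbb{N}$ let $(U_k^{(n)})_{k\in\mathbb{N}}$ be independent random variables uniformly distributed on $\{1,\dots,n\}$. Assume $m_n\to\infty$ and $m_n=o(n)$ as $n\to\infty$. Then $${\rm Var}\Bigl(\sum_{p\le m_n,\ p\ \text{prime}}\log p\cdot\mathbbm{1}_{\{\max_{1\le k\le m_n}\lambda_p(U_k^{(n)})\ge1\}}\Bigr)=O(m_n\log m_n),\qquad n\to\infty.$$
   Context: For a prime $p$ and $k\in\mathbb{N}$, $\lambda_p(k)$ is the exponent of $p$ in the prime factorization of $k$. *)

theory Defs
  imports "HOL-Probability.Probability" "HOL-Library.Landau_Symbols"
          "HOL-Computational_Algebra.Primes"
begin

text \<open>Joint law of (U_1^{(n)},...,U_m^{(n)}): independent, each uniform on {1..n}.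
  Coordinates outside {1..m} are fixed to the default value 0 (irrelevant).\<close>
definition U_law :: "nat \<Rightarrow> nat \<Rightarrow> (nat \<Rightarrow> nat) pmf" where
  "U_law n m = Pi_pmf {1..m} 0 (\<lambda>_. pmf_of_set {1..n})"

definition S_var :: "nat \<Rightarrow> (nat \<Rightarrow> nat) \<Rightarrow> real" where
  "S_var m u = (\<Sum>p\<in>{p. prime p \<and> p \<le> m}.
      ln (real p) * (if Max ((\<lambda>k. multiplicity p (u k)) ` {1..m}) \<ge> 1 then 1 else 0))"

end

theory Submission
  imports Defs
begin

text \<open>
  On the support of the law, \<^const>\<open>S_var\<close> is the sum over primes \<open>p \<le> m\<close> of
  \<open>ln p\<close> times the indicator of the event \<open>D p\<close> that some draw is divisible by \<open>p\<close>,
  so its variance is \<open>\<Sum>p q. ln p ln q Cov(D p, D q)\<close>. Two events have the same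
  covariance as their complements, and the complement of \<open>D p\<close> is a product event;
  hence \<open>Cov(D p, D q) = x\<^sup>m - y\<^sup>m \<le> m (x - y)\<close>, where \<open>x - y\<close> is the covariance of
  \<open>p dvd U\<close> and \<open>q dvd U\<close> for a single uniform \<open>U\<close> on \<open>{1..n}\<close>, which is at most
  \<open>(1/p + 1/q)/n\<close> for distinct primes \<open>p, q \<le> n\<close>. Summing gives
  \<open>Var \<le> ln m \<theta>(m) + 2 (m/n) \<theta>(m) \<Sum>p\<le>m. ln p / p\<close>, and Chebyshev's bound
  \<open>\<theta>(m) \<le> m ln 4\<close> with Mertens' bound \<open>\<Sum>p\<le>m. ln p / p \<le> ln m + ln 4\<close> give
  \<open>Var \<le> 14 m ln m\<close> whenever \<open>3 \<le> m \<le> n\<close>, which is all that is used of the hypotheses.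
\<close>

section \<open>Chebyshev's and Mertens' bounds\<close>

lemma prod_distinct_primes_dvd:
  fixes P :: "nat set"
  assumes "finite P" "\<And>p. p \<in> P \<Longrightarrow> prime p \<and> p dvd N"
  shows "\<Prod>P dvd N"
  using assms
proof (induction P rule: finite_induct)
  case (insert p P)
  have "coprime p q" if "q \<in> P" for q
    using insert that by (metis insertCI primes_coprime)
  hence "coprime p (\<Prod>P)" by (rule prod_coprime_right)
  with insert show ?case by (simp add: divides_mult)
qed simp

lemma sum_ln_prime_divisors_le:
  fixes P :: "nat set"
  assumes "finite P" "\<And>p. p \<in> P \<Longrightarrow> prime p \<and> p dvd N" "N > 0"
  shows "(\<Sum>p\<in>P. ln (real p)) \<le> ln (real N)"
proof -
  have pos: "\<And>p. p \<in> P \<Longrightarrow> 0 < real p" using assms(2) prime_gt_0_nat by simp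
  have "\<Prod>P \<le> N" using prod_distinct_primes_dvd[OF assms(1,2)] assms(3) by (rule dvd_imp_le)
  hence "real (\<Prod>P) \<le> real N" by (simp only: of_nat_le_iff)
  moreover have "0 < real (\<Prod>P)" using pos assms(1) by (simp add: prod_pos)
  ultimately have "ln (real (\<Prod>P)) \<le> ln (real N)" by simp
  thus ?thesis using pos assms(1) by (simp add: ln_prod)
qed

definition primes_theta :: "nat \<Rightarrow> real" where
  "primes_theta x = (\<Sum>p | prime p \<and> p \<le> x. ln (real p))"

lemma binomial_odd_central_le: "(2*k+1 choose k) \<le> 4^k"
proof -
  have "2 * (2*k+1 choose k) = (\<Sum>j\<in>{k, k+1}. 2*k+1 choose j)"
    using binomial_symmetric[of k "2*k+1"] by simp
  also have "\<dots> \<le> (\<Sum>j\<le>2*k+1. 2*k+1 choose j)" by (intro sum_mono2) auto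
  also have "\<dots> = 2^(2*k+1)" by (rule choose_row_sum)
  also have "\<dots> = 2 * 4^k" by (simp add: power_mult)
  finally show ?thesis by simp
qed

lemma prime_dvd_binomial_odd_central:
  assumes "prime p" "k+1 < p" "p \<le> 2*k+1"
  shows "p dvd (2*k+1 choose k)"
proof -
  have "fact k * fact (k+1) * (2*k+1 choose k) = (fact (2*k+1) :: nat)"
    using binomial_fact_lemma[of k "2*k+1"] by (simp add: mult_ac)
  moreover have "p dvd fact (2*k+1)" "\<not> p dvd fact k" "\<not> p dvd fact (k+1)"
    using assms by (subst prime_dvd_fact_iff[OF assms(1)]; simp)+
  ultimately show ?thesis using assms(1) by (metis prime_dvd_mult_iff)
qed

lemma primes_theta_nonprime:
  assumes "\<not> prime x"
  shows "primes_theta x = primes_theta (x - 1)"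
proof -
  have "prime p \<and> p \<le> x \<longleftrightarrow> prime p \<and> p \<le> x - 1" for p
    using assms by (cases "p = x") auto
  thus ?thesis by (simp add: primes_theta_def)
qed

lemma primes_theta_odd_le: "primes_theta (2*k+1) \<le> primes_theta (k+1) + real k * ln 4"
proof -
  define Q where "Q = {p. prime p \<and> k+1 < p \<and> p \<le> 2*k+1}"
  have finQ: "finite Q" unfolding Q_def by (rule finite_subset[of _ "{..2*k+1}"]) auto
  have split: "{p. prime p \<and> p \<le> 2*k+1} = {p. prime p \<and> p \<le> k+1} \<union> Q"
    by (auto simp: Q_def)
  have "primes_theta (2*k+1) = primes_theta (k+1) + (\<Sum>p\<in>Q. ln (real p))"
    unfolding primes_theta_def split using finQ by (subst sum.union_disjoint) (auto simp: Q_def)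
  also have "(\<Sum>p\<in>Q. ln (real p)) \<le> ln (real (2*k+1 choose k))"
  proof (rule sum_ln_prime_divisors_le[OF finQ])
    show "prime p \<and> p dvd (2*k+1 choose k)" if "p \<in> Q" for p
      using that prime_dvd_binomial_odd_central[of p k] by (simp add: Q_def)
  qed simp
  also have "\<dots> \<le> ln (real (4^k))"
    using binomial_odd_central_le[of k] by (subst ln_le_cancel_iff) (auto simp del: of_nat_power)
  also have "\<dots> = real k * ln 4" by (simp add: ln_realpow)
  finally show ?thesis by simp
qed

lemma primes_theta_le: "primes_theta x \<le> real x * ln 4"
proof (induction x rule: less_induct)
  case (less x)
  have "x < 2 \<or> x = 2 \<or> x > 2 \<and> even x \<or> (\<exists>k. x = 2*k+1 \<and> k \<ge> 1)" by presburger
  then consider "x < 2" | "x = 2" | "x > 2" "even x" | k where "x = 2*k+1" "k \<ge> 1"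
    by blast
  then show ?case
  proof cases
    case 1
    hence "primes_theta x = 0"
      unfolding primes_theta_def by (intro sum.neutral) (auto dest: prime_ge_2_nat)
    thus ?thesis by simp
  next
    case 2
    have "{p. prime p \<and> p \<le> x} = {2}" using 2 by (auto dest: prime_ge_2_nat)
    hence "primes_theta x = ln 2" by (simp add: primes_theta_def)
    also have "\<dots> \<le> ln 4" by simp
    also have "\<dots> \<le> real x * ln 4" using 2 by simp
    finally show ?thesis .
  next
    case 3
    hence "\<not> prime x" using prime_odd_nat[of x] by auto
    hence "primes_theta x = primes_theta (x - 1)" by (rule primes_theta_nonprime)
    also have "\<dots> \<le> real (x - 1) * ln 4" using less[of "x - 1"] 3 by simp
    also have "\<dots> \<le> real x * ln 4" by simp
    finally show ?thesis .
  next
    case (4 k)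
    have "primes_theta x \<le> primes_theta (k+1) + real k * ln 4"
      using primes_theta_odd_le 4 by simp
    also have "primes_theta (k+1) \<le> real (k+1) * ln 4" using less[of "k+1"] 4 by simp
    finally show ?thesis using 4 by (simp add: algebra_simps)
  qed
qed

lemma card_multiples_atLeastAtMost:
  assumes "d > 0"
  shows "card {k\<in>{1..x}. d dvd k} = x div d"
proof -
  have "{k\<in>{1..x}. d dvd k} = (\<lambda>j. d*j) ` {1..x div d}"
    using assms by (auto simp: less_eq_div_iff_mult_less_eq mult.commute elim!: dvdE)
  also have "card \<dots> = x div d"
    using assms by (subst card_image) (auto simp: inj_on_def)
  finally show ?thesis .
qed

lemma real_div_nat_ge:
  assumes "d > 0"
  shows "real x / real d - 1 \<le> real (x div d)"
proof -
  have "real x = real d * real (x div d) + real (x mod d)"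
    by (metis div_mult_mod_eq mult.commute of_nat_add of_nat_mult)
  moreover have "real (x mod d) < real d" using assms by simp
  ultimately show ?thesis using assms by (simp add: field_simps)
qed

lemma mertens_upper_bound:
  assumes "x \<ge> 1"
  shows "(\<Sum>p | prime p \<and> p \<le> x. ln (real p) / real p) \<le> ln (real x) + ln 4"
proof -
  define P where "P = {p. prime p \<and> p \<le> x}"
  have finP: "finite P" unfolding P_def by auto
  have P_pos: "p > 0" if "p \<in> P" for p using that prime_gt_0_nat by (simp add: P_def)
  have "(\<Sum>p\<in>P. ln (real p) * real (x div p))
      = (\<Sum>p\<in>P. \<Sum>k | k \<in> {1..x} \<and> p dvd k. ln (real p))"
    using card_multiples_atLeastAtMost[of _ x] P_pos by (intro sum.cong) auto
  also have "\<dots> = (\<Sum>k\<in>{1..x}. \<Sum>p | p \<in> P \<and> p dvd k. ln (real p))"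
    by (rule sum.swap_restrict) (auto simp: finP)
  also have "\<dots> \<le> (\<Sum>k\<in>{1..x}. ln (real x))"
  proof (intro sum_mono order.trans[OF sum_ln_prime_divisors_le])
    fix k assume "k \<in> {1..x}"
    thus "0 < k" "ln (real k) \<le> ln (real x)" by auto
  qed (auto simp: finP P_def)
  finally have "(\<Sum>p\<in>P. ln (real p) * real (x div p)) \<le> real x * ln (real x)" by simp
  moreover have "(\<Sum>p\<in>P. ln (real p) * (real x / real p - 1)) \<le> (\<Sum>p\<in>P. ln (real p) * real (x div p))"
    using P_pos by (intro sum_mono mult_left_mono real_div_nat_ge) (auto simp: Suc_le_eq)
  moreover have "(\<Sum>p\<in>P. ln (real p) * (real x / real p - 1))
      = real x * (\<Sum>p\<in>P. ln (real p) / real p) - primes_theta x"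
    by (simp add: primes_theta_def P_def sum_subtractf sum_distrib_left right_diff_distrib
        mult.commute)
  ultimately have "real x * (\<Sum>p\<in>P. ln (real p) / real p) \<le> real x * (ln (real x) + ln 4)"
    using primes_theta_le[of x] by (simp add: algebra_simps)
  thus ?thesis using assms unfolding P_def by (subst (asm) mult_le_cancel_left_pos) auto
qed

section \<open>Covariances of events\<close>

definition event_cov :: "'a pmf \<Rightarrow> 'a set \<Rightarrow> 'a set \<Rightarrow> real" where
  "event_cov M A B = measure_pmf.prob M (A \<inter> B) - measure_pmf.prob M A * measure_pmf.prob M B"

lemma event_cov_le_1: "event_cov M A B \<le> 1"
proof -
  have "measure_pmf.prob M (A \<inter> B) \<le> 1" by simp
  moreover have "0 \<le> measure_pmf.prob M A * measure_pmf.prob M B" by simp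
  ultimately show ?thesis unfolding event_cov_def by linarith
qed

lemma event_cov_Compl: "event_cov M (- A) (- B) = event_cov M A B"
proof -
  have compl: "measure_pmf.prob M (- X) = 1 - measure_pmf.prob M X" for X
    using measure_pmf.prob_compl[of X M] by (simp add: Compl_eq_Diff_UNIV)
  have "- A \<inter> - B = - (A \<union> B)" by blast
  hence "event_cov M (- A) (- B)
      = (1 - measure_pmf.prob M (A \<union> B)) - (1 - measure_pmf.prob M A) * (1 - measure_pmf.prob M B)"
    by (simp only: event_cov_def compl)
  moreover have "measure_pmf.prob M (A \<union> B)
      = measure_pmf.prob M A + measure_pmf.prob M B - measure_pmf.prob M (A \<inter> B)"
    by (rule measure_Un3) (auto simp: fmeasurable_def measure_pmf.emeasure_eq_measure)
  ultimately show ?thesis by (simp add: event_cov_def algebra_simps)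
qed

lemma measure_pmf_variance_cong:
  assumes "\<And>x. x \<in> set_pmf M \<Longrightarrow> f x = g x"
  shows "measure_pmf.variance M f = measure_pmf.variance M g"
proof -
  have "measure_pmf.expectation M f = measure_pmf.expectation M g"
    using assms by (intro integral_cong_AE) (auto simp: AE_measure_pmf_iff)
  thus ?thesis
    using assms by (intro integral_cong_AE) (auto simp: AE_measure_pmf_iff)
qed

lemma measure_pmf_variance_sum_indicator:
  fixes w :: "'i \<Rightarrow> real"
  assumes "finite I"
  shows "measure_pmf.variance M (\<lambda>x. \<Sum>i\<in>I. w i * indicator (E i) x)
       = (\<Sum>i\<in>I. \<Sum>j\<in>I. w i * w j * event_cov M (E i) (E j))"
proof -
  let ?X = "\<lambda>x. \<Sum>i\<in>I. w i * indicator (E i) x"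
  have sq: "(?X x)\<^sup>2 = (\<Sum>i\<in>I. \<Sum>j\<in>I. w i * w j * indicator (E i \<inter> E j) x)" for x
    unfolding power2_eq_square sum_product
    by (intro sum.cong refl) (simp add: indicator_inter_arith)
  have int: "integrable M (indicator X :: _ \<Rightarrow> real)" for X
    by (simp add: measure_pmf.emeasure_eq_measure)
  have EX: "measure_pmf.expectation M ?X = (\<Sum>i\<in>I. w i * measure_pmf.prob M (E i))"
    by (simp add: int)
  have EX2: "measure_pmf.expectation M (\<lambda>x. (?X x)\<^sup>2)
      = (\<Sum>i\<in>I. \<Sum>j\<in>I. w i * w j * measure_pmf.prob M (E i \<inter> E j))"
    unfolding sq by (simp add: int)
  have "measure_pmf.variance M ?X
      = measure_pmf.expectation M (\<lambda>x. (?X x)\<^sup>2) - (measure_pmf.expectation M ?X)\<^sup>2"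
    by (rule measure_pmf.variance_eq) (auto simp: int sq)
  also have "\<dots> = (\<Sum>i\<in>I. \<Sum>j\<in>I. w i * w j * measure_pmf.prob M (E i \<inter> E j))
      - (\<Sum>i\<in>I. w i * measure_pmf.prob M (E i))\<^sup>2"
    by (simp only: EX EX2)
  also have "\<dots> = (\<Sum>i\<in>I. \<Sum>j\<in>I. w i * w j * event_cov M (E i) (E j))"
    by (simp only: power2_eq_square sum_product event_cov_def right_diff_distrib sum_subtractf mult_ac)
  finally show ?thesis .
qed

lemma power_diff_le_mult:
  fixes x y :: real
  assumes "0 \<le> x" "x \<le> 1" "0 \<le> y" "y \<le> 1" "x - y \<le> c" "0 \<le> c"
  shows "x ^ m - y ^ m \<le> real m * c"
proof (cases "x \<le> y")
  case True
  hence "x ^ m \<le> y ^ m" using assms by (intro power_mono) auto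
  moreover have "0 \<le> real m * c" using assms by simp
  ultimately show ?thesis by linarith
next
  case False
  have "x ^ m - y ^ m \<le> real m * (x - y)"
  proof (induction m)
    case (Suc m)
    have "x ^ Suc m - y ^ Suc m = x * (x ^ m - y ^ m) + (x - y) * y ^ m"
      by (simp add: algebra_simps)
    also have "x * (x ^ m - y ^ m) \<le> x ^ m - y ^ m"
      using False assms by (intro mult_left_le_one_le) (auto simp: power_mono)
    also have "(x - y) * y ^ m \<le> x - y"
      using False assms by (intro mult_left_le) (auto simp: power_le_one)
    finally show ?case using Suc by (simp add: algebra_simps)
  qed simp
  also have "\<dots> \<le> real m * c" using assms by (intro mult_left_mono) auto
  finally show ?thesis .
qed

lemma event_cov_Pi_pmf_le:
  assumes "finite A" "event_cov p E F \<le> c" "0 \<le> c"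
  shows "event_cov (Pi_pmf A d (\<lambda>_. p)) (Pi A (\<lambda>_. E)) (Pi A (\<lambda>_. F)) \<le> real (card A) * c"
proof -
  have "Pi A (\<lambda>_. E) \<inter> Pi A (\<lambda>_. F) = Pi A (\<lambda>_. E \<inter> F)" by auto
  hence "event_cov (Pi_pmf A d (\<lambda>_. p)) (Pi A (\<lambda>_. E)) (Pi A (\<lambda>_. F))
      = measure_pmf.prob p (E \<inter> F) ^ card A - (measure_pmf.prob p E * measure_pmf.prob p F) ^ card A"
    using assms(1) by (simp add: event_cov_def measure_Pi_pmf_Pi power_mult_distrib)
  also have "\<dots> \<le> real (card A) * c"
    using assms(2,3) by (intro power_diff_le_mult) (auto simp: event_cov_def mult_le_one)
  finally show ?thesis .
qed

section \<open>Divisibility of uniform draws\<close>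

lemma measure_pmf_of_set_multiples:
  assumes "0 < d" "0 < n"
  shows "measure_pmf.prob (pmf_of_set {1..n}) {x. d dvd x} = real (n div d) / real n"
proof -
  have "{1..n} \<inter> {x. d dvd x} = {k \<in> {1..n}. d dvd k}" by blast
  hence "card ({1..n} \<inter> {x. d dvd x}) = n div d"
    using card_multiples_atLeastAtMost[OF assms(1)] by (simp only:)
  thus ?thesis using assms(2) by (simp add: measure_pmf_of_set)
qed

lemma event_cov_uniform_multiples_le:
  fixes p q n :: nat
  assumes "coprime p q" "0 < p" "p \<le> n" "0 < q" "q \<le> n"
  shows "event_cov (pmf_of_set {1..n}) {x. p dvd x} {x. q dvd x}
           \<le> (1 / real p + 1 / real q) / real n"
proof -
  define N where "N = real n"
  have N: "0 < N" using assms by (simp add: N_def)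
  have joint: "{x. p dvd x} \<inter> {x. q dvd x} = {x. p * q dvd x}"
    using assms(1) by (auto simp: divides_mult dest: dvd_mult_left dvd_mult_right)
  have prob: "measure_pmf.prob (pmf_of_set {1..n}) {x. d dvd x} = real (n div d) / N"
    if "0 < d" for d
    using measure_pmf_of_set_multiples[OF that] N by (simp add: N_def)
  have "real (n div (p * q)) / N \<le> 1 / (p * q)"
    using of_nat_div_le_of_nat[of n "p * q"] N by (simp add: N_def field_simps)
  moreover have "1 / d - 1 / N \<le> real (n div d) / N" "0 \<le> 1 / d - 1 / N"
    if "0 < d" "d \<le> n" for d :: nat
  proof -
    have "1 / d - 1 / N = (real n / real d - 1) / N" using N that by (simp add: N_def field_simps)
    also have "\<dots> \<le> real (n div d) / N"
      using real_div_nat_ge[of d n] that N by (intro divide_right_mono) auto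
    finally show "1 / d - 1 / N \<le> real (n div d) / N" .
    show "0 \<le> 1 / d - 1 / N" using that by (simp add: N_def frac_le)
  qed
  hence "(1 / p - 1 / N) * (1 / q - 1 / N) \<le> real (n div p) / N * (real (n div q) / N)"
    using assms N by (intro mult_mono) auto
  ultimately have "event_cov (pmf_of_set {1..n}) {x. p dvd x} {x. q dvd x}
      \<le> 1 / (p * q) - (1 / p - 1 / N) * (1 / q - 1 / N)"
    unfolding event_cov_def joint using assms prob[of p] prob[of q] prob[of "p * q"] by simp
  also have "\<dots> = (1 / p + 1 / q) / N - 1 / N\<^sup>2"
    using assms N by (simp add: field_simps power2_eq_square)
  also have "\<dots> \<le> (1 / p + 1 / q) / N" by simp
  finally show ?thesis by (simp add: N_def)
qed

definition some_draw_divisible :: "nat \<Rightarrow> nat \<Rightarrow> (nat \<Rightarrow> nat) set" where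
  "some_draw_divisible m p = {u. \<exists>k\<in>{1..m}. p dvd u k}"

text \<open>The support matters: \<open>multiplicity p 0 = 0\<close> although \<open>p\<close> divides \<open>0\<close>.\<close>

lemma S_var_eq_sum_indicator:
  assumes "u \<in> set_pmf (U_law n m)" "0 < n"
  shows "S_var m u = (\<Sum>p | prime p \<and> p \<le> m.
           ln (real p) * indicator (some_draw_divisible m p) u)"
  unfolding S_var_def
proof (intro sum.cong refl)
  fix p assume p: "p \<in> {p. prime p \<and> p \<le> m}"
  have "set_pmf (U_law n m) = PiE_dflt {1..m} 0 (\<lambda>_. {1..n})"
    using assms(2) unfolding U_law_def by (subst set_Pi_pmf) (auto simp: o_def)
  hence "u k \<noteq> 0" if "k \<in> {1..m}" for k
    using assms(1) that unfolding PiE_dflt_def by fastforce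
  hence "1 \<le> multiplicity p (u k) \<longleftrightarrow> p dvd u k" if "k \<in> {1..m}" for k
    using that p prime_multiplicity_gt_zero_iff[of p "u k"] by (simp add: Suc_le_eq)
  moreover have "{1..m} \<noteq> {}" using p prime_ge_2_nat[of p] by auto
  ultimately have "1 \<le> Max ((\<lambda>k. multiplicity p (u k)) ` {1..m}) \<longleftrightarrow> (\<exists>k\<in>{1..m}. p dvd u k)"
    by (simp add: Max_ge_iff)
  thus "ln (real p) * (if 1 \<le> Max ((\<lambda>k. multiplicity p (u k)) ` {1..m}) then 1 else 0)
      = ln (real p) * indicator (some_draw_divisible m p) u"
    by (auto simp: indicator_def some_draw_divisible_def)
qed

lemma event_cov_some_draw_divisible_le:
  assumes "prime p" "prime q" "p \<noteq> q" "p \<le> n" "q \<le> n"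
  shows "event_cov (U_law n m) (some_draw_divisible m p) (some_draw_divisible m q)
           \<le> real m * ((1 / real p + 1 / real q) / real n)"
proof -
  have "event_cov (pmf_of_set {1..n}) {x. \<not> p dvd x} {x. \<not> q dvd x}
      = event_cov (pmf_of_set {1..n}) {x. p dvd x} {x. q dvd x}"
    using event_cov_Compl[of _ "{x. p dvd x}" "{x. q dvd x}"] by (simp add: Collect_neg_eq)
  also have "\<dots> \<le> (1 / p + 1 / q) / n"
    using assms by (intro event_cov_uniform_multiples_le) (auto simp: primes_coprime prime_gt_0_nat)
  finally have "event_cov (U_law n m) (Pi {1..m} (\<lambda>_. {x. \<not> p dvd x}))
      (Pi {1..m} (\<lambda>_. {x. \<not> q dvd x})) \<le> real (card {1..m}) * ((1 / p + 1 / q) / n)"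
    unfolding U_law_def by (intro event_cov_Pi_pmf_le) auto
  moreover have "some_draw_divisible m r = - Pi {1..m} (\<lambda>_. {x. \<not> r dvd x})" for r
    by (auto simp: some_draw_divisible_def)
  ultimately show ?thesis by (simp add: event_cov_Compl)
qed

lemma weighted_double_sum_le:
  fixes w a :: "'a \<Rightarrow> real" and c :: "'a \<Rightarrow> 'a \<Rightarrow> real"
  assumes "finite P" "\<And>p. p \<in> P \<Longrightarrow> 0 \<le> w p"
    and "\<And>p q. p \<in> P \<Longrightarrow> q \<in> P \<Longrightarrow> c p q \<le> (if p = q then 1 else 0) + K * (a p + a q)"
  shows "(\<Sum>p\<in>P. \<Sum>q\<in>P. w p * w q * c p q)
           \<le> (\<Sum>p\<in>P. (w p)\<^sup>2) + 2 * K * (\<Sum>p\<in>P. w p) * (\<Sum>p\<in>P. w p * a p)"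
proof -
  have "(\<Sum>p\<in>P. \<Sum>q\<in>P. w p * w q * c p q)
      \<le> (\<Sum>p\<in>P. \<Sum>q\<in>P. w p * w q * ((if p = q then 1 else 0) + K * (a p + a q)))"
    using assms(2,3) by (intro sum_mono mult_left_mono) auto
  also have "\<dots> = (\<Sum>p\<in>P. \<Sum>q\<in>P. (if q = p then (w p)\<^sup>2 else 0)
      + K * (w q * (w p * a p) + w p * (w q * a q)))"
    by (intro sum.cong refl) (simp add: algebra_simps power2_eq_square)
  also have "\<dots> = (\<Sum>p\<in>P. (w p)\<^sup>2) + K * (\<Sum>p\<in>P. \<Sum>q\<in>P. w q * (w p * a p))
      + K * (\<Sum>p\<in>P. \<Sum>q\<in>P. w p * (w q * a q))"
    using assms(1) by (simp add: sum.distrib sum_distrib_left distrib_left)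
  also have "(\<Sum>p\<in>P. \<Sum>q\<in>P. w q * (w p * a p)) = (\<Sum>p\<in>P. w p * a p) * (\<Sum>q\<in>P. w q)"
    unfolding sum_product by (simp add: mult.commute)
  also have "(\<Sum>p\<in>P. \<Sum>q\<in>P. w p * (w q * a q)) = (\<Sum>p\<in>P. w p) * (\<Sum>q\<in>P. w q * a q)"
    by (simp add: sum_product)
  finally show ?thesis by (simp add: algebra_simps)
qed

lemma variance_S_var_le_theta:
  assumes "m \<le> n" "0 < m"
  shows "measure_pmf.variance (U_law n m) (S_var m)
           \<le> ln (real m) * primes_theta m
             + 2 * (real m / real n) * primes_theta m * (\<Sum>p | prime p \<and> p \<le> m. ln (real p) / real p)"
proof -
  define P where "P = {p. prime p \<and> p \<le> m}"
  define D where "D = some_draw_divisible m"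
  have finP: "finite P" by (simp add: P_def)
  have ln_nonneg: "0 \<le> ln (real p)" if "p \<in> P" for p
    using that prime_ge_1_nat by (simp add: P_def)
  have "measure_pmf.variance (U_law n m) (S_var m)
      = measure_pmf.variance (U_law n m) (\<lambda>u. \<Sum>p\<in>P. ln (real p) * indicator (D p) u)"
    using assms by (intro measure_pmf_variance_cong) (simp add: S_var_eq_sum_indicator P_def D_def)
  also have "\<dots> = (\<Sum>p\<in>P. \<Sum>q\<in>P. ln (real p) * ln (real q) * event_cov (U_law n m) (D p) (D q))"
    by (rule measure_pmf_variance_sum_indicator[OF finP])
  also have "\<dots> \<le> (\<Sum>p\<in>P. (ln (real p))\<^sup>2)
      + 2 * (real m / real n) * (\<Sum>p\<in>P. ln (real p)) * (\<Sum>p\<in>P. ln (real p) * (1 / real p))"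
  proof (rule weighted_double_sum_le[OF finP ln_nonneg])
    fix p q assume pq: "p \<in> P" "q \<in> P"
    have nonneg: "0 \<le> real m / real n * (1 / real p + 1 / real q)" by simp
    show "event_cov (U_law n m) (D p) (D q)
        \<le> (if p = q then 1 else 0) + real m / real n * (1 / real p + 1 / real q)"
    proof (cases "p = q")
      case True
      have "event_cov (U_law n m) (D p) (D q) \<le> 1 + real m / real n * (1 / real p + 1 / real q)"
        using event_cov_le_1[of "U_law n m" "D p" "D q"] nonneg by linarith
      with True show ?thesis by simp
    next
      case False
      thus ?thesis
        using event_cov_some_draw_divisible_le[of p q n m] pq assms by (simp add: P_def D_def)
    qed
  qed
  also have "(\<Sum>p\<in>P. (ln (real p))\<^sup>2) \<le> (\<Sum>p\<in>P. ln (real m) * ln (real p))"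
    unfolding power2_eq_square using ln_nonneg
    by (intro sum_mono mult_right_mono) (auto simp: P_def dest: prime_gt_0_nat)
  finally show ?thesis
    by (simp add: P_def primes_theta_def sum_distrib_left)
qed

lemma variance_S_var_le:
  assumes "3 \<le> m" "m \<le> n"
  shows "measure_pmf.variance (U_law n m) (S_var m) \<le> 14 * (real m * ln (real m))"
proof -
  define Mt where "Mt = (\<Sum>p | prime p \<and> p \<le> m. ln (real p) / real p)"
  have ln4: "ln 4 \<le> (2::real)"
    using ln_2_less_1 ln_mult[of 2 2] by simp
  have ln_m: "1 \<le> ln (real m)"
    using exp_le assms(1) by (subst ln_ge_iff) auto
  have theta: "0 \<le> primes_theta m" "primes_theta m \<le> 2 * real m"
    using primes_theta_le[of m] mult_left_mono[OF ln4, of "real m"]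
    by (auto simp: primes_theta_def intro!: sum_nonneg ln_ge_zero dest: prime_ge_1_nat)
  have Mt: "0 \<le> Mt" "Mt \<le> ln (real m) + 2"
    using mertens_upper_bound[of m] assms ln4
    by (auto simp: Mt_def intro!: sum_nonneg ln_ge_zero dest: prime_ge_1_nat)
  have "measure_pmf.variance (U_law n m) (S_var m)
      \<le> ln (real m) * primes_theta m + 2 * (real m / real n) * primes_theta m * Mt"
    using variance_S_var_le_theta assms by (simp add: Mt_def)
  also have "\<dots> \<le> ln (real m) * (2 * real m) + 2 * 1 * (2 * real m) * (ln (real m) + 2)"
    using assms theta Mt ln_m
    by (intro add_mono mult_mono mult_left_mono) auto
  also have "\<dots> \<le> 14 * (real m * ln (real m))"
    using ln_m assms by (simp add: algebra_simps)
  finally show ?thesis .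
qed

theorem lemma6p2:
  fixes m :: "nat \<Rightarrow> nat"
  assumes "filterlim m at_top at_top"
    and "(\<lambda>n. real (m n)) \<in> o(\<lambda>n. real n)"
  shows "(\<lambda>n. measure_pmf.variance (U_law n (m n)) (S_var (m n)))
           \<in> O(\<lambda>n. real (m n) * ln (real (m n)))"
proof (rule landau_o.bigI[of 14])
  have "eventually (\<lambda>n. 3 \<le> m n) at_top"
    using assms(1) by (simp add: filterlim_at_top)
  moreover have "eventually (\<lambda>n. real (m n) \<le> real n) at_top"
    using landau_o.smallD[OF assms(2), of 1] by simp
  ultimately show "eventually (\<lambda>n. norm (measure_pmf.variance (U_law n (m n)) (S_var (m n)))
      \<le> 14 * norm (real (m n) * ln (real (m n)))) at_top"
  proof eventually_elim
    case (elim n)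
    thus ?case
      using variance_S_var_le[of "m n" n] measure_pmf.variance_positive[of "U_law n (m n)"]
      by simp
  qed
qed simp

end
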